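(* Define $F:\mathbb{R}^2\to\mathbb{R}$ by $$F(x)=\begin{cases}\exp\!\left(\frac{1}{\|x\|_2^2-1}\right) & \|x\|_2<1\\ 0 & \|x\|_2=1\\ -\exp\!\left(\frac{-1}{\|x\|_2^2-1}\right)\left[\sin\!\left(\frac{1}{\|x\|_2-1}\right)\frac{x^{(1)}}{\|x\|_2}-\cos\!\left(\frac{1}{\|x\|_2-1}\right)\frac{x^{(2)}}{\|x\|_2}\right] & \|x\|_2>1,\end{cases}$$ where $x^{(1)},x^{(2)}$ are the components of $x$. Then $F$ is bounded from below, is differentiable at every point of $\mathbb{R}^2$, and its gradient is locally Lipschitz continuous on $\mathbb{R}^2$. *)

theory Defs
  imports "HOL-Analysis.Analysis"
begin

definition F61 :: "real^2 \<Rightarrow> real" where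
  "F61 x = (if norm x < 1 then exp (1 / ((norm x)\<^sup>2 - 1))
            else if norm x = 1 then 0
            else - exp (-1 / ((norm x)\<^sup>2 - 1)) *
                   (sin (1 / (norm x - 1)) * (x $ 1) / norm x
                    - cos (1 / (norm x - 1)) * (x $ 2) / norm x))"

definition locally_lipschitz_everywhere :: "('a::metric_space \<Rightarrow> 'b::metric_space) \<Rightarrow> bool" where
  "locally_lipschitz_everywhere G \<longleftrightarrow> (\<forall>x. \<exists>e>0. \<exists>L. L-lipschitz_on (ball x e) G)"

end

theory Submission
  imports Defs
begin

text \<open>For a profile g on (0, \<infinity>) let flat g be exp(-1/t) g(t) for t > 0 and 0 otherwise.
  If g and its first two derivatives grow at most polynomially in 1/t, then exp(-1/t) absorbs
  this growth: flat g is differentiable everywhere with derivative flat (g/t^2 + g'), and both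
  flat g and this derivative have bounded derivatives, hence are globally Lipschitz.
  Writing r = \<parallel>x\<parallel> and t = r^2 - 1, F61 equals flat 1 (-t) - flat s_0 t x_1 + flat s_(\<pi>/2) t x_2
  for the profiles s_c(t) = sin (1/(r - 1) + c) / r, which satisfy these growth bounds.
  So the gradient of F61 is built from globally Lipschitz profiles, r^2 and the coordinates
  by sums, products and compositions, all of which preserve Lipschitz continuity on bounded sets.
  Outside the unit ball the exponential factor is at most 1, which bounds F61 from below.\<close>

section \<open>Lipschitz continuity on bounded sets\<close>

text \<open>Bounded sets instead of small balls make compositions and products straightforward:
  a map that is Lipschitz on a bounded set sends it to a bounded set.\<close>

definition lipschitz_on_bounded_sets :: "('a::metric_space \<Rightarrow> 'b::metric_space) \<Rightarrow> bool" where
  "lipschitz_on_bounded_sets f \<longleftrightarrow> (\<forall>S. bounded S \<longrightarrow> (\<exists>L. L-lipschitz_on S f))"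

lemma bounded_lipschitz_image:
  assumes "L-lipschitz_on S f" "bounded S"
  shows "bounded (f ` S)"
proof (cases "S = {}")
  case False
  then obtain a where "a \<in> S" by blast
  obtain e where e: "\<And>y. y \<in> S \<Longrightarrow> dist a y \<le> e"
    using assms(2) unfolding bounded_any_center[of _ a] by blast
  have "dist (f a) (f y) \<le> L * e" if "y \<in> S" for y
    using lipschitz_onD[OF assms(1) \<open>a \<in> S\<close> that] e[OF that] lipschitz_on_nonneg[OF assms(1)]
    by (meson mult_left_mono order_trans)
  then show ?thesis
    unfolding bounded_any_center[of _ "f a"] by blast
qed simp

lemma lipschitz_on_bounded_sets_imp_locally_lipschitz:
  "lipschitz_on_bounded_sets f \<Longrightarrow> locally_lipschitz_everywhere f"
  unfolding lipschitz_on_bounded_sets_def locally_lipschitz_everywhere_def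
  by (meson bounded_ball zero_less_one)

lemma lipschitz_imp_lipschitz_on_bounded_sets: "L-lipschitz_on UNIV f \<Longrightarrow> lipschitz_on_bounded_sets f"
  unfolding lipschitz_on_bounded_sets_def by (meson lipschitz_on_subset subset_UNIV)

lemma lipschitz_on_bounded_sets_linear: "bounded_linear f \<Longrightarrow> lipschitz_on_bounded_sets f"
  by (metis bounded_linear.lipschitz_boundE lipschitz_imp_lipschitz_on_bounded_sets)

lemma lipschitz_on_bounded_sets_const: "lipschitz_on_bounded_sets (\<lambda>_. c)"
  by (rule lipschitz_imp_lipschitz_on_bounded_sets[OF lipschitz_on_constant])

lemma lipschitz_on_bounded_sets_add:
  fixes f g :: "'a::metric_space \<Rightarrow> 'b::real_normed_vector"
  assumes "lipschitz_on_bounded_sets f" "lipschitz_on_bounded_sets g"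
  shows "lipschitz_on_bounded_sets (\<lambda>x. f x + g x)"
  using assms unfolding lipschitz_on_bounded_sets_def by (blast intro: lipschitz_on_add)

lemma lipschitz_on_bounded_sets_diff:
  fixes f g :: "'a::metric_space \<Rightarrow> 'b::real_normed_vector"
  assumes "lipschitz_on_bounded_sets f" "lipschitz_on_bounded_sets g"
  shows "lipschitz_on_bounded_sets (\<lambda>x. f x - g x)"
  using assms unfolding lipschitz_on_bounded_sets_def by (blast intro: lipschitz_on_diff)

lemma lipschitz_on_bounded_sets_compose:
  fixes f :: "'a::metric_space \<Rightarrow> 'b::metric_space" and g :: "'b \<Rightarrow> 'c::metric_space"
  assumes "lipschitz_on_bounded_sets g" "lipschitz_on_bounded_sets f"
  shows "lipschitz_on_bounded_sets (\<lambda>x. g (f x))"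
  unfolding lipschitz_on_bounded_sets_def
proof (intro allI impI)
  fix S :: "'a set" assume "bounded S"
  obtain L where L: "L-lipschitz_on S f"
    using assms(2) \<open>bounded S\<close> unfolding lipschitz_on_bounded_sets_def by blast
  moreover obtain M where "M-lipschitz_on (f ` S) g"
    using assms(1) bounded_lipschitz_image[OF L \<open>bounded S\<close>]
    unfolding lipschitz_on_bounded_sets_def by blast
  ultimately show "\<exists>L. L-lipschitz_on S (\<lambda>x. g (f x))"
    using lipschitz_on_compose2 by blast
qed

lemma lipschitz_on_bounded_sets_bilinear:
  fixes f :: "'a::metric_space \<Rightarrow> 'b::real_normed_vector" and g :: "'a \<Rightarrow> 'c::real_normed_vector"
    and prod :: "'b \<Rightarrow> 'c \<Rightarrow> 'd::real_normed_vector"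
  assumes prod: "bounded_bilinear prod"
    and "lipschitz_on_bounded_sets f" "lipschitz_on_bounded_sets g"
  shows "lipschitz_on_bounded_sets (\<lambda>x. prod (f x) (g x))"
  unfolding lipschitz_on_bounded_sets_def
proof (intro allI impI)
  fix S :: "'a set" assume "bounded S"
  obtain L M where L: "L-lipschitz_on S f" and M: "M-lipschitz_on S g"
    using assms(2,3) \<open>bounded S\<close> unfolding lipschitz_on_bounded_sets_def by blast
  obtain A where A: "0 < A" "\<And>x. x \<in> S \<Longrightarrow> norm (f x) \<le> A"
    using bounded_lipschitz_image[OF L \<open>bounded S\<close>] unfolding bounded_pos by blast
  obtain B where B: "0 < B" "\<And>x. x \<in> S \<Longrightarrow> norm (g x) \<le> B"
    using bounded_lipschitz_image[OF M \<open>bounded S\<close>] unfolding bounded_pos by blast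
  obtain K where K: "0 \<le> K" "\<And>a b. norm (prod a b) \<le> norm a * norm b * K"
    using bounded_bilinear.nonneg_bounded[OF prod] by blast
  have L0: "0 \<le> L" and M0: "0 \<le> M"
    using L M by (auto intro: lipschitz_on_nonneg)
  have "dist (prod (f x) (g x)) (prod (f y) (g y)) \<le> (K * (L * B + A * M)) * dist x y"
    if "x \<in> S" "y \<in> S" for x y
  proof -
    have "prod (f x) (g x) - prod (f y) (g y) = prod (f x - f y) (g x) + prod (f y) (g x - g y)"
      by (simp add: bounded_bilinear.diff_left[OF prod] bounded_bilinear.diff_right[OF prod])
    then have "dist (prod (f x) (g x)) (prod (f y) (g y))
        \<le> norm (f x - f y) * norm (g x) * K + norm (f y) * norm (g x - g y) * K"
      unfolding dist_norm by (metis K(2) add_mono norm_triangle_le)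
    also have "\<dots> \<le> (L * dist x y) * B * K + A * (M * dist x y) * K"
      using lipschitz_onD[OF L that] lipschitz_onD[OF M that] A(2)[OF that(2)] B(2)[OF that(1)]
        A(1) B(1) K(1) L0 M0
      by (intro add_mono mult_right_mono mult_mono) (auto simp: dist_norm)
    finally show ?thesis by (simp add: algebra_simps)
  qed
  moreover have "0 \<le> K * (L * B + A * M)"
    using A(1) B(1) K(1) L0 M0 by simp
  ultimately show "\<exists>L. L-lipschitz_on S (\<lambda>x. prod (f x) (g x))"
    by (blast intro: lipschitz_onI)
qed

section \<open>Flat functions\<close>

definition flat :: "(real \<Rightarrow> real) \<Rightarrow> real \<Rightarrow> real" where
  "flat g t = (if 0 < t then exp (-1/t) * g t else 0)"

definition moderate :: "(real \<Rightarrow> real) \<Rightarrow> bool" where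
  "moderate g \<longleftrightarrow> (\<exists>C N. \<forall>t>0. \<bar>g t\<bar> \<le> C * (1 + 1/t) ^ N)"

lemma exp_neg_inverse_mult_power_bounded:
  "\<exists>K\<ge>0. \<forall>t>0. exp (-1/t) * (1 + 1/t) ^ N \<le> (K::real)"
proof (intro exI conjI allI impI)
  fix t :: real assume "t > 0"
  define y where "y = 1/t"
  define m where "m = Suc N"
  have y: "y > 0" using \<open>t > 0\<close> by (simp add: y_def)
  have m: "real m \<ge> 1" by (simp add: m_def)
  have "(1 + y) / m \<le> 1 + y / m" using m y by (simp add: field_simps)
  also have "\<dots> \<le> exp (y / m)" by simp
  finally have "((1 + y) / m) ^ m \<le> exp (y / m) ^ m"
    using y m by (intro power_mono) auto
  also have "\<dots> = exp y" using m by (simp add: exp_of_nat_mult[symmetric])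
  finally have "(1 + y) ^ m \<le> real m ^ m * exp y"
    using m by (simp add: power_divide field_simps)
  moreover have "(1 + y) ^ N \<le> (1 + y) ^ m" using y by (intro power_increasing) (auto simp: m_def)
  ultimately have "(1 + y) ^ N / exp y \<le> real m ^ m" by (simp add: field_simps)
  then show "exp (-1/t) * (1 + 1/t) ^ N \<le> real (Suc N) ^ Suc N"
    by (simp add: y_def m_def exp_minus field_simps)
qed simp

lemma moderateI: "(\<And>t. 0 < t \<Longrightarrow> \<bar>g t\<bar> \<le> C * (1 + 1/t) ^ N) \<Longrightarrow> moderate g"
  unfolding moderate_def by blast

lemma moderate_bounded: "(\<And>t. 0 < t \<Longrightarrow> \<bar>g t\<bar> \<le> B) \<Longrightarrow> moderate g"
  by (rule moderateI[of g B 0]) simp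

lemma moderate_const: "moderate (\<lambda>_. c)"
  by (rule moderate_bounded) (rule order_refl)

lemma moderate_add:
  assumes "moderate f" "moderate g"
  shows "moderate (\<lambda>t. f t + g t)"
proof -
  obtain C N D M where f: "\<And>t. 0 < t \<Longrightarrow> \<bar>f t\<bar> \<le> C * (1 + 1/t) ^ N"
    and g: "\<And>t. 0 < t \<Longrightarrow> \<bar>g t\<bar> \<le> D * (1 + 1/t) ^ M"
    using assms unfolding moderate_def by blast
  show ?thesis
  proof (rule moderateI)
    fix t :: real assume t: "0 < t"
    define p where "p = 1 + 1/t"
    have "1 \<le> p" using t by (simp add: p_def)
    have "C * p ^ N * 1 \<le> C * p ^ N * p ^ M" "D * p ^ M * 1 \<le> D * p ^ M * p ^ N"
      using f[OF t] g[OF t] \<open>1 \<le> p\<close> unfolding p_def[symmetric]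
      by (intro mult_left_mono one_le_power; linarith)+
    then show "\<bar>f t + g t\<bar> \<le> (C + D) * p ^ (N + M)"
      using f[OF t] g[OF t] unfolding p_def[symmetric]
      by (simp add: power_add algebra_simps)
  qed
qed

lemma moderate_mult:
  assumes "moderate f" "moderate g"
  shows "moderate (\<lambda>t. f t * g t)"
proof -
  obtain C N D M where f: "\<And>t. 0 < t \<Longrightarrow> \<bar>f t\<bar> \<le> C * (1 + 1/t) ^ N"
    and g: "\<And>t. 0 < t \<Longrightarrow> \<bar>g t\<bar> \<le> D * (1 + 1/t) ^ M"
    using assms unfolding moderate_def by blast
  show ?thesis
  proof (rule moderateI)
    fix t :: real assume "0 < t"
    have "\<bar>f t\<bar> * \<bar>g t\<bar> \<le> (C * (1 + 1/t) ^ N) * (D * (1 + 1/t) ^ M)"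
      using f[OF \<open>0 < t\<close>] g[OF \<open>0 < t\<close>] by (intro mult_mono) auto
    then show "\<bar>f t * g t\<bar> \<le> (C * D) * (1 + 1/t) ^ (N + M)"
      by (simp add: abs_mult power_add algebra_simps)
  qed
qed

lemma moderate_inverse: "moderate (\<lambda>t. 1 / t)"
  by (rule moderateI[of _ 1 1]) simp

lemma moderate_power: "moderate f \<Longrightarrow> moderate (\<lambda>t. f t ^ k)"
  by (induction k) (simp_all add: moderate_const moderate_mult)

lemma moderate_minus: "moderate f \<Longrightarrow> moderate (\<lambda>t. - f t)"
  using moderate_mult[OF moderate_const[of "-1"]] by simp

lemma moderate_diff: "moderate f \<Longrightarrow> moderate g \<Longrightarrow> moderate (\<lambda>t. f t - g t)"
  using moderate_add[OF _ moderate_minus] by simp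

lemma moderate_divide_power: "moderate f \<Longrightarrow> moderate (\<lambda>t. f t / t ^ k)"
  using moderate_mult[OF _ moderate_power[OF moderate_inverse]]
  by (simp add: power_inverse divide_inverse)

lemma moderate_sin: "moderate (\<lambda>t. sin (f t))"
  and moderate_cos: "moderate (\<lambda>t. cos (f t))"
  by (auto intro: moderate_bounded[of _ 1])

lemma moderate_divide_const: "moderate f \<Longrightarrow> moderate (\<lambda>t. f t / c)"
  using moderate_mult[OF _ moderate_const[of "1/c"]] by simp

lemma flat_bounded:
  assumes "moderate g"
  shows "\<exists>B. \<forall>t. \<bar>flat g t\<bar> \<le> B"
proof -
  obtain C N where g: "\<And>t. 0 < t \<Longrightarrow> \<bar>g t\<bar> \<le> C * (1 + 1/t) ^ N"
    using assms unfolding moderate_def by blast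
  obtain K :: real where K: "K \<ge> 0" "\<And>t. 0 < t \<Longrightarrow> exp (-1/t) * (1 + 1/t) ^ N \<le> K"
    using exp_neg_inverse_mult_power_bounded by blast
  have "\<bar>flat g t\<bar> \<le> \<bar>C\<bar> * K" for t
  proof (cases "0 < t")
    case True
    have "\<bar>flat g t\<bar> = exp (-1/t) * \<bar>g t\<bar>"
      using True by (simp add: flat_def abs_mult)
    also have "\<dots> \<le> exp (-1/t) * (\<bar>C\<bar> * (1 + 1/t) ^ N)"
    proof (rule mult_left_mono)
      have "C * (1 + 1/t) ^ N \<le> \<bar>C\<bar> * (1 + 1/t) ^ N"
        using True by (intro mult_right_mono) auto
      then show "\<bar>g t\<bar> \<le> \<bar>C\<bar> * (1 + 1/t) ^ N"
        using g[OF True] by linarith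
    qed simp
    also have "\<dots> \<le> \<bar>C\<bar> * K"
      using K(2)[OF True] by (subst mult.left_commute) (intro mult_left_mono; simp)
    finally show ?thesis .
  next
    case False
    then show ?thesis using K by (simp add: flat_def)
  qed
  then show ?thesis by blast
qed

lemma flat_le_square:
  assumes "moderate g"
  shows "\<exists>B. \<forall>t. \<bar>flat g t\<bar> \<le> B * t\<^sup>2"
proof -
  obtain B where B: "\<And>t. \<bar>flat (\<lambda>t. g t / t\<^sup>2) t\<bar> \<le> B"
    using flat_bounded[OF moderate_divide_power[OF assms]] by blast
  have "\<bar>flat g t\<bar> \<le> B * t\<^sup>2" for t
  proof -
    have "flat g t = t\<^sup>2 * flat (\<lambda>t. g t / t\<^sup>2) t"
      by (simp add: flat_def)
    also have "\<bar>\<dots>\<bar> \<le> t\<^sup>2 * B"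
      using B[of t] by (simp add: abs_mult mult_left_mono)
    finally show ?thesis by (simp add: mult.commute)
  qed
  then show ?thesis by blast
qed

lemma has_real_derivative_0_if_le_square:
  fixes f :: "real \<Rightarrow> real"
  assumes "\<And>t. \<bar>f t\<bar> \<le> B * t\<^sup>2"
  shows "(f has_real_derivative 0) (at 0)"
proof -
  have f0: "f 0 = 0" using assms[of 0] by simp
  have "\<bar>f t / t\<bar> \<le> B * \<bar>t\<bar>" for t
  proof (cases "t = 0")
    case False
    have "\<bar>f t\<bar> \<le> B * \<bar>t\<bar> * \<bar>t\<bar>"
      using assms[of t] by (simp add: power2_eq_square abs_mult[symmetric])
    with False show ?thesis by (simp add: abs_divide divide_le_eq)
  qed simp
  then have "\<forall>\<^sub>F t in at 0. norm (f t / t) \<le> B * \<bar>t\<bar>" by simp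
  moreover have "((\<lambda>t. B * \<bar>t\<bar>) \<longlongrightarrow> 0) (at 0)"
    by (rule tendsto_eq_intros | simp)+
  ultimately have "((\<lambda>t. f t / t) \<longlongrightarrow> 0) (at 0)"
    by (rule Lim_null_comparison)
  then show ?thesis by (simp add: has_field_derivative_iff f0)
qed

definition flat_deriv :: "(real \<Rightarrow> real) \<Rightarrow> (real \<Rightarrow> real) \<Rightarrow> real \<Rightarrow> real" where
  "flat_deriv g g' = flat (\<lambda>t. g t / t\<^sup>2 + g' t)"

lemma has_real_derivative_flat:
  assumes g': "\<And>t. 0 < t \<Longrightarrow> (g has_real_derivative g' t) (at t)" and "moderate g"
  shows "(flat g has_real_derivative flat_deriv g g' t) (at t)"
proof -
  consider "0 < t" | "t < 0" | "t = 0" by linarith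
  then show ?thesis
  proof cases
    case 1
    have "((\<lambda>s. exp (-1/s) * g s) has_real_derivative flat_deriv g g' t) (at t)"
      using 1 by (auto intro!: derivative_eq_intros g'
          simp: flat_deriv_def flat_def field_simps power2_eq_square)
    then show ?thesis
      by (rule has_field_derivative_transform_within_open[where S = "{0<..}"])
        (use 1 in \<open>auto simp: flat_def\<close>)
  next
    case 2
    have "((\<lambda>_. 0) has_real_derivative flat_deriv g g' t) (at t)"
      using 2 by (simp add: flat_deriv_def flat_def)
    then show ?thesis
      by (rule has_field_derivative_transform_within_open[where S = "{..<0}"])
        (use 2 in \<open>auto simp: flat_def\<close>)
  next
    case 3
    obtain B where "\<And>t. \<bar>flat g t\<bar> \<le> B * t\<^sup>2"
      using flat_le_square[OF \<open>moderate g\<close>] by blast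
    then have "(flat g has_real_derivative 0) (at 0)"
      by (rule has_real_derivative_0_if_le_square)
    then show ?thesis
      using 3 by (simp add: flat_deriv_def flat_def)
  qed
qed

lemma lipschitz_flat:
  assumes "\<And>t. 0 < t \<Longrightarrow> (g has_real_derivative g' t) (at t)" "moderate g" "moderate g'"
  shows "\<exists>L. L-lipschitz_on UNIV (flat g)"
proof -
  have "moderate (\<lambda>t. g t / t\<^sup>2 + g' t)"
    using assms by (intro moderate_add moderate_divide_power)
  then obtain B where B: "\<And>t. \<bar>flat_deriv g g' t\<bar> \<le> B"
    unfolding flat_deriv_def using flat_bounded by blast
  have "dist (flat g s) (flat g t) \<le> B * dist s t" for s t
    using field_differentiable_bound[of UNIV "flat g" "flat_deriv g g'" B]
      has_real_derivative_flat[OF assms(1,2)] B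
    by (simp add: dist_real_def has_field_derivative_at_within)
  moreover have "0 \<le> B" using B[of 0] by simp
  ultimately show ?thesis by (blast intro: lipschitz_onI)
qed

locale flat_profile =
  fixes g g' g'' :: "real \<Rightarrow> real"
  assumes has_real_derivative_g: "0 < t \<Longrightarrow> (g has_real_derivative g' t) (at t)"
    and has_real_derivative_g': "0 < t \<Longrightarrow> (g' has_real_derivative g'' t) (at t)"
    and moderate: "moderate g" "moderate g'" "moderate g''"
begin

lemma flat_has_real_derivative: "(flat g has_real_derivative flat_deriv g g' t) (at t)"
  by (rule has_real_derivative_flat[OF has_real_derivative_g moderate(1)])

lemma flat_lipschitz: "\<exists>L. L-lipschitz_on UNIV (flat g)"
  by (rule lipschitz_flat[OF has_real_derivative_g moderate(1,2)])

lemma flat_deriv_lipschitz: "\<exists>L. L-lipschitz_on UNIV (flat_deriv g g')"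
  unfolding flat_deriv_def
proof (rule lipschitz_flat)
  show "((\<lambda>t. g t / t\<^sup>2 + g' t) has_real_derivative
      g' t / t\<^sup>2 - 2 * g t / t ^ 3 + g'' t) (at t)" if "0 < t" for t
    using that by (auto intro!: derivative_eq_intros has_real_derivative_g has_real_derivative_g'
        simp: field_simps power2_eq_square power3_eq_cube)
  show "moderate (\<lambda>t. g t / t\<^sup>2 + g' t)"
    using moderate by (intro moderate_add moderate_divide_power)
  show "moderate (\<lambda>t. g' t / t\<^sup>2 - 2 * g t / t ^ 3 + g'' t)"
    using moderate
    by (intro moderate_add moderate_diff moderate_divide_power moderate_mult moderate_const)
qed

end

lemma flat_profile_const: "flat_profile (\<lambda>_. c) (\<lambda>_. 0) (\<lambda>_. 0)"
  by unfold_locales (simp_all add: moderate_const)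

section \<open>The oscillating profiles\<close>

text \<open>With t = \<parallel>x\<parallel>^2 - 1, the functions phase and radial are 1/(\<parallel>x\<parallel> - 1) and 1/\<parallel>x\<parallel>.\<close>

definition phase :: "real \<Rightarrow> real" where
  "phase t = 1 / (sqrt (1 + t) - 1)"

definition radial :: "real \<Rightarrow> real" where
  "radial t = 1 / sqrt (1 + t)"

lemma has_real_derivative_radial:
  "0 < t \<Longrightarrow> (radial has_real_derivative - (radial t ^ 3) / 2) (at t)"
  unfolding radial_def
  by (auto intro!: derivative_eq_intros simp: field_simps power3_eq_cube)

lemma has_real_derivative_phase:
  "0 < t \<Longrightarrow> (phase has_real_derivative - (phase t ^ 2 * radial t) / 2) (at t)"
  unfolding phase_def radial_def
  by (auto intro!: derivative_eq_intros simp: field_simps power2_eq_square)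

lemma phase_le:
  assumes "0 < t"
  shows "\<bar>phase t\<bar> \<le> 2 * (1 + 1/t)"
proof -
  define q where "q = sqrt (1 + t)"
  have "1 < q" using assms by (simp add: q_def)
  have q2: "q * q = 1 + t" using assms by (simp add: q_def)
  then have "(q - 1) * (q + 1) = t" by (simp add: algebra_simps)
  then have "phase t = (q + 1) / t" using \<open>1 < q\<close> assms by (simp add: phase_def q_def field_simps)
  also have "\<dots> \<le> (2 + t) / t"
    using assms \<open>1 < q\<close> q2 mult_left_mono[of 1 q q] by (intro divide_right_mono) auto
  also have "\<dots> = 2 * (1 + 1/t) - 1" using assms by (simp add: field_simps)
  finally show ?thesis using \<open>1 < q\<close> by (simp add: phase_def q_def)
qed

lemma moderate_phase: "moderate phase"
  using phase_le by (intro moderateI[of _ 2 1]) simp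

lemma moderate_radial: "moderate radial"
  by (rule moderate_bounded[of _ 1]) (simp add: radial_def)

definition spiral :: "real \<Rightarrow> real \<Rightarrow> real" where
  "spiral c t = sin (phase t + c) * radial t"

definition spiral' :: "real \<Rightarrow> real \<Rightarrow> real" where
  "spiral' c t =
     - (cos (phase t + c) * phase t ^ 2 * radial t ^ 2 + sin (phase t + c) * radial t ^ 3) / 2"

definition spiral'' :: "real \<Rightarrow> real \<Rightarrow> real" where
  "spiral'' c t =
     (3 * sin (phase t + c) * radial t ^ 5 + 3 * cos (phase t + c) * phase t ^ 2 * radial t ^ 4
      + 2 * cos (phase t + c) * phase t ^ 3 * radial t ^ 3
      - sin (phase t + c) * phase t ^ 4 * radial t ^ 3) / 4"

lemma flat_profile_spiral: "flat_profile (spiral c) (spiral' c) (spiral'' c)"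
proof
  fix t :: real assume "0 < t"
  note phase_radial =
    has_real_derivative_phase[OF \<open>0 < t\<close>] has_real_derivative_radial[OF \<open>0 < t\<close>]
  show "(spiral c has_real_derivative spiral' c t) (at t)"
    unfolding spiral_def[abs_def] spiral'_def
    by (rule derivative_eq_intros phase_radial refl)+
      (simp add: algebra_simps power2_eq_square power3_eq_cube)
  show "(spiral' c has_real_derivative spiral'' c t) (at t)"
    unfolding spiral'_def[abs_def] spiral''_def
    by (rule derivative_eq_intros phase_radial refl)+
      (simp_all add: field_simps eval_nat_numeral)
next
  show "moderate (spiral c)" "moderate (spiral' c)" "moderate (spiral'' c)"
    unfolding spiral_def[abs_def] spiral'_def[abs_def] spiral''_def[abs_def]
    by (intro moderate_add moderate_diff moderate_mult moderate_minus moderate_divide_const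
        moderate_power moderate_const moderate_sin moderate_cos moderate_phase moderate_radial)+
qed

section \<open>The function F61\<close>

lemma F61_eq:
  "F61 x = flat (\<lambda>_. 1) (1 - x \<bullet> x) - flat (spiral 0) (x \<bullet> x - 1) * x $ 1
     + flat (spiral (pi/2)) (x \<bullet> x - 1) * x $ 2"
proof -
  have xx: "x \<bullet> x = (norm x)\<^sup>2" by (simp add: power2_norm_eq_inner)
  consider "norm x < 1" | "norm x = 1" | "1 < norm x" by linarith
  then show ?thesis
  proof cases
    case 1
    then have "(norm x)\<^sup>2 < 1" by (simp add: power_less_one_iff)
    then show ?thesis using 1 unfolding xx by (simp add: F61_def flat_def field_simps)
  next
    case 2
    then show ?thesis unfolding xx by (simp add: F61_def flat_def)
  next
    case 3
    then have "1 < (norm x)\<^sup>2" by (simp add: one_less_power)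
    moreover from this have "\<not> (norm x)\<^sup>2 < 1" by linarith
    moreover have "sqrt (1 + ((norm x)\<^sup>2 - 1)) = norm x" by simp
    ultimately show ?thesis using 3 unfolding xx
      by (simp add: F61_def flat_def spiral_def phase_def radial_def sin_add algebra_simps)
  qed
qed

definition grad_F61 :: "real^2 \<Rightarrow> real^2" where
  "grad_F61 x =
     (2 * (flat_deriv (spiral (pi/2)) (spiral' (pi/2)) (x \<bullet> x - 1) * x $ 2
        - flat_deriv (spiral 0) (spiral' 0) (x \<bullet> x - 1) * x $ 1
        - flat_deriv (\<lambda>_. 1) (\<lambda>_. 0) (1 - x \<bullet> x))) *\<^sub>R x
     - flat (spiral 0) (x \<bullet> x - 1) *\<^sub>R axis 1 1
     + flat (spiral (pi/2)) (x \<bullet> x - 1) *\<^sub>R axis 2 1"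

lemma has_derivative_F61: "(F61 has_derivative (\<lambda>h. grad_F61 x \<bullet> h)) (at x)"
proof -
  note bump = flat_profile.flat_has_real_derivative[OF flat_profile_const]
  note spiral = flat_profile.flat_has_real_derivative[OF flat_profile_spiral]
  note component = bounded_linear_imp_has_derivative[OF bounded_linear_vec_nth]
  have "((\<lambda>x. flat (\<lambda>_. 1) (1 - x \<bullet> x) - flat (spiral 0) (x \<bullet> x - 1) * x $ 1
      + flat (spiral (pi/2)) (x \<bullet> x - 1) * x $ 2) has_derivative (\<lambda>h. grad_F61 x \<bullet> h)) (at x)"
    by (rule derivative_eq_intros DERIV_compose_FDERIV[OF bump] DERIV_compose_FDERIV[OF spiral]
        component refl)+
      (simp add: grad_F61_def fun_eq_iff inner_add_left inner_diff_left inner_axis inner_axis'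
        inner_real_def inner_commute algebra_simps)
  then show ?thesis by (simp add: F61_eq[abs_def])
qed

lemma lipschitz_on_bounded_sets_grad_F61: "lipschitz_on_bounded_sets grad_F61"
proof -
  have "lipschitz_on_bounded_sets (\<lambda>x::real^2. x \<bullet> x)"
    by (intro lipschitz_on_bounded_sets_bilinear[OF bounded_bilinear_inner]
        lipschitz_on_bounded_sets_linear[OF bounded_linear_ident])
  then have shifted_square: "lipschitz_on_bounded_sets (\<lambda>x::real^2. x \<bullet> x - 1)"
    "lipschitz_on_bounded_sets (\<lambda>x::real^2. 1 - x \<bullet> x)"
    by (intro lipschitz_on_bounded_sets_diff lipschitz_on_bounded_sets_const; assumption)+
  have profile: "lipschitz_on_bounded_sets (\<lambda>x::real^2. \<psi> (x \<bullet> x - 1))"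
    "lipschitz_on_bounded_sets (\<lambda>x::real^2. \<psi> (1 - x \<bullet> x))"
    if "\<exists>L. L-lipschitz_on UNIV \<psi>" for \<psi>
    using that lipschitz_imp_lipschitz_on_bounded_sets
      lipschitz_on_bounded_sets_compose[of \<psi>, OF _ shifted_square(1)]
      lipschitz_on_bounded_sets_compose[of \<psi>, OF _ shifted_square(2)]
    by blast+
  note bump = profile(2)[OF flat_profile.flat_deriv_lipschitz[OF flat_profile_const]]
  note spiral = profile(1)[OF flat_profile.flat_lipschitz[OF flat_profile_spiral]]
    profile(1)[OF flat_profile.flat_deriv_lipschitz[OF flat_profile_spiral]]
  note linear = lipschitz_on_bounded_sets_linear[OF bounded_linear_vec_nth]
    lipschitz_on_bounded_sets_linear[OF bounded_linear_ident]
  show ?thesis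
    unfolding grad_F61_def
    by (intro lipschitz_on_bounded_sets_add lipschitz_on_bounded_sets_diff
        lipschitz_on_bounded_sets_bilinear[OF bounded_bilinear_mult]
        lipschitz_on_bounded_sets_bilinear[OF bounded_bilinear_scaleR]
        lipschitz_on_bounded_sets_const bump spiral linear)
qed

lemma F61_lower_bound: "-2 \<le> F61 x"
proof (cases "1 < norm x")
  case True
  let ?s = "1 / (norm x - 1)" and ?e = "exp (-1 / ((norm x)\<^sup>2 - 1))"
  have "1 < (norm x)\<^sup>2" using True by (simp add: one_less_power)
  then have e: "0 < ?e" "?e \<le> 1" by auto
  have component: "\<bar>x $ i / norm x\<bar> \<le> 1" for i
    using True component_le_norm_cart[of x i] by (simp add: abs_divide divide_le_eq)
  have "\<bar>sin ?s * (x $ 1 / norm x)\<bar> \<le> 1" "\<bar>cos ?s * (x $ 2 / norm x)\<bar> \<le> 1"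
    unfolding abs_mult
    by (rule mult_le_one[OF abs_sin_le_one abs_ge_zero component]
        mult_le_one[OF abs_cos_le_one abs_ge_zero component])+
  then have "\<bar>sin ?s * x $ 1 / norm x - cos ?s * x $ 2 / norm x\<bar> \<le> 2"
    using abs_triangle_ineq4[of "sin ?s * x $ 1 / norm x" "cos ?s * x $ 2 / norm x"] by simp
  then have "\<bar>?e * (sin ?s * x $ 1 / norm x - cos ?s * x $ 2 / norm x)\<bar> \<le> 1 * 2"
    unfolding abs_mult using e by (intro mult_mono) auto
  then show ?thesis using True by (simp add: F61_def)
next
  case False
  then have "0 \<le> F61 x" by (simp add: F61_def)
  then show ?thesis by simp
qed

theorem proposition6p1:
  shows "bdd_below (range F61)
    \<and> (\<forall>x. F61 differentiable (at x))
    \<and> (\<exists>G :: real^2 \<Rightarrow> real^2.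
          (\<forall>x. (F61 has_derivative (\<lambda>h. G x \<bullet> h)) (at x))
          \<and> locally_lipschitz_everywhere G)"
proof (intro conjI allI exI[of _ grad_F61])
  show "bdd_below (range F61)"
    by (rule bdd_belowI[of _ "-2"]) (auto intro: F61_lower_bound)
  show "F61 differentiable (at x)" for x
    using has_derivative_F61 by (auto simp: differentiable_def)
  show "(F61 has_derivative (\<lambda>h. grad_F61 x \<bullet> h)) (at x)" for x
    by (rule has_derivative_F61)
  show "locally_lipschitz_everywhere grad_F61"
    by (rule lipschitz_on_bounded_sets_imp_locally_lipschitz[OF lipschitz_on_bounded_sets_grad_F61])
qed

end
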